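(* Let $L$ be a finite-dimensional Lie algebra over a field $F$ and let $M$ be a maximal subalgebra of $L$. Then the number $\dim(C/k(C))$, where $C$ is an ideal completion of $M$ in $L$, does not depend on the choice of the ideal completion $C$; that is, the ideal index $\eta(L:M)$ is well-defined.
   Context: For a nonzero subalgebra $B$ of $L$, the strict core $k(B)$ is the sum of all ideals of $L$ that are proper subalgebras of $B$ (it is $0$ if there are none). A subalgebra $C$ of $L$ is a completion of $M$ if $C\not\subseteq M$ but every proper subalgebra of $C$ that is an ideal of $L$ is contained in $M$. An ideal completion of $M$ is a completion of $M$ which is an ideal of $L$ (such exist for every maximal subalgebra). The ideal index $\eta(L:M)$ is defined as $\dim(C/k(C))$ for an ideal completion $C$ of $M$. *)

theory Defs
  imports Complex_Main
begin

text \<open>A Lie algebra L over a field 'k is modelled as the whole carrier type 'v,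
  a vector space over 'k with scalar multiplication s, together with a bracket br
  which is bilinear, alternating and satisfies the Jacobi identity.\<close>

definition lie_algebra :: "('k::field \<Rightarrow> 'v::ab_group_add \<Rightarrow> 'v) \<Rightarrow> ('v \<Rightarrow> 'v \<Rightarrow> 'v) \<Rightarrow> bool" where
  "lie_algebra s br \<longleftrightarrow> vector_space s
     \<and> (\<forall>x y z. br (x + y) z = br x z + br y z)
     \<and> (\<forall>x y z. br x (y + z) = br x y + br x z)
     \<and> (\<forall>a x y. br (s a x) y = s a (br x y))
     \<and> (\<forall>a x y. br x (s a y) = s a (br x y))
     \<and> (\<forall>x. br x x = 0)
     \<and> (\<forall>x y z. br x (br y z) + br y (br z x) + br z (br x y) = 0)"

definition finite_dim :: "('k::field \<Rightarrow> 'v::ab_group_add \<Rightarrow> 'v) \<Rightarrow> bool" where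
  "finite_dim s \<longleftrightarrow> (\<exists>B. finite B \<and> module.span s B = UNIV)"

definition lie_subalgebra :: "('k::field \<Rightarrow> 'v::ab_group_add \<Rightarrow> 'v) \<Rightarrow> ('v \<Rightarrow> 'v \<Rightarrow> 'v) \<Rightarrow> 'v set \<Rightarrow> bool" where
  "lie_subalgebra s br B \<longleftrightarrow> module.subspace s B \<and> (\<forall>x\<in>B. \<forall>y\<in>B. br x y \<in> B)"

definition lie_ideal :: "('k::field \<Rightarrow> 'v::ab_group_add \<Rightarrow> 'v) \<Rightarrow> ('v \<Rightarrow> 'v \<Rightarrow> 'v) \<Rightarrow> 'v set \<Rightarrow> bool" where
  "lie_ideal s br I \<longleftrightarrow> module.subspace s I \<and> (\<forall>x. \<forall>y\<in>I. br x y \<in> I)"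

definition maximal_subalgebra :: "('k::field \<Rightarrow> 'v::ab_group_add \<Rightarrow> 'v) \<Rightarrow> ('v \<Rightarrow> 'v \<Rightarrow> 'v) \<Rightarrow> 'v set \<Rightarrow> bool" where
  "maximal_subalgebra s br M \<longleftrightarrow> lie_subalgebra s br M \<and> M \<noteq> UNIV
     \<and> (\<forall>B. lie_subalgebra s br B \<and> M \<subseteq> B \<longrightarrow> B = M \<or> B = UNIV)"

definition strict_core :: "('k::field \<Rightarrow> 'v::ab_group_add \<Rightarrow> 'v) \<Rightarrow> ('v \<Rightarrow> 'v \<Rightarrow> 'v) \<Rightarrow> 'v set \<Rightarrow> 'v set" where
  "strict_core s br B = module.span s (\<Union>{I. lie_ideal s br I \<and> lie_subalgebra s br I \<and> I \<subset> B})"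

definition completion :: "('k::field \<Rightarrow> 'v::ab_group_add \<Rightarrow> 'v) \<Rightarrow> ('v \<Rightarrow> 'v \<Rightarrow> 'v) \<Rightarrow> 'v set \<Rightarrow> 'v set \<Rightarrow> bool" where
  "completion s br M C \<longleftrightarrow> lie_subalgebra s br C \<and> \<not> C \<subseteq> M
     \<and> (\<forall>D. lie_subalgebra s br D \<and> D \<subset> C \<and> lie_ideal s br D \<longrightarrow> D \<subseteq> M)"

definition ideal_completion :: "('k::field \<Rightarrow> 'v::ab_group_add \<Rightarrow> 'v) \<Rightarrow> ('v \<Rightarrow> 'v \<Rightarrow> 'v) \<Rightarrow> 'v set \<Rightarrow> 'v set \<Rightarrow> bool" where
  "ideal_completion s br M C \<longleftrightarrow> completion s br M C \<and> lie_ideal s br C"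

text \<open>dim(C / k(C)) = dim C - dim k(C), since k(C) is a subspace of C.\<close>
definition quot_core_dim :: "('k::field \<Rightarrow> 'v::ab_group_add \<Rightarrow> 'v) \<Rightarrow> ('v \<Rightarrow> 'v \<Rightarrow> 'v) \<Rightarrow> 'v set \<Rightarrow> nat" where
  "quot_core_dim s br C = vector_space.dim s C - vector_space.dim s (strict_core s br C)"

end

theory Submission
  imports Defs "HOL-Library.Set_Algebras"
begin

text \<open>Put N = k(C1) + k(C2). For each ideal completion Ci, the intersection
  Ci \<inter> N is an ideal properly inside Ci (as N \<subseteq> M), hence equals k(Ci); so
  dim(Ci/k(Ci)) = dim((Ci + N)/N), and (Ci + N)/N is a minimal ideal of L/N not contained
  in M/N. Two such minimal ideals A/N, B/N either coincide or meet trivially. In the latter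
  case B + M = L and [B, A \<inter> M] \<subseteq> A \<inter> B = N \<subseteq> M, so A \<inter> M is an ideal, whence A \<inter> M = N and
  A/N complements M/N; the same holds for B, so both have dimension dim(L/M).\<close>

lemma set_plus_eq: "A + B = {x + y |x y. x \<in> A \<and> y \<in> B}"
  by (auto simp: set_plus_def)

lemma lie_ideal_imp_subalgebra: "lie_ideal s br I \<Longrightarrow> lie_subalgebra s br I"
  by (simp add: lie_ideal_def lie_subalgebra_def)

locale lie_structure = vector_space s
  for s :: "'k::field \<Rightarrow> 'v::ab_group_add \<Rightarrow> 'v" +
  fixes br :: "'v \<Rightarrow> 'v \<Rightarrow> 'v"
  assumes lie_algebra: "lie_algebra s br"
begin

lemma bracket_add_left: "br (x + y) z = br x z + br y z"
  and bracket_add_right: "br x (y + z) = br x y + br x z"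
  and bracket_scale_right: "br x (s a y) = s a (br x y)"
  and bracket_self: "br x x = 0"
  using lie_algebra by (simp_all add: lie_algebra_def)

lemma bracket_zero_right: "br x 0 = 0"
  using bracket_add_right[of x 0 0] by simp

lemma bracket_antisym: "br x y = - br y x"
proof -
  have "br (x + y) (x + y) = br x x + br x y + (br y x + br y y)"
    by (simp add: bracket_add_left bracket_add_right add.assoc)
  then have "br x y + br y x = 0"
    by (simp add: bracket_self)
  then show ?thesis
    by (simp add: eq_neg_iff_add_eq_0)
qed

lemma lie_ideal_subspace: "lie_ideal s br I \<Longrightarrow> subspace I"
  by (simp add: lie_ideal_def)

lemma lie_subalgebra_subspace: "lie_subalgebra s br B \<Longrightarrow> subspace B"
  by (simp add: lie_subalgebra_def)

lemma lie_ideal_bracket_left: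
  assumes "lie_ideal s br I" "y \<in> I"
  shows "br y x \<in> I"
proof -
  have "- br x y \<in> I"
    using assms subspace_neg by (simp add: lie_ideal_def)
  then show ?thesis
    by (simp add: bracket_antisym[of y x])
qed

lemma lie_ideal_Int:
  "lie_ideal s br I \<Longrightarrow> lie_ideal s br J \<Longrightarrow> lie_ideal s br (I \<inter> J)"
  by (auto simp: lie_ideal_def subspace_inter)

lemma subspace_set_plus: "subspace A \<Longrightarrow> subspace B \<Longrightarrow> subspace (A + B)"
  by (simp add: set_plus_eq subspace_sums)

lemma subset_set_plus_left: "subspace B \<Longrightarrow> A \<subseteq> A + B"
  using set_zero_plus2[of B A] subspace_0 by (simp add: add.commute)

lemma subset_set_plus_right: "subspace A \<Longrightarrow> B \<subseteq> A + B"
  using set_zero_plus2 subspace_0 by blast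

lemma set_plus_subset_subspace: "subspace C \<Longrightarrow> A \<subseteq> C \<Longrightarrow> B \<subseteq> C \<Longrightarrow> A + B \<subseteq> C"
  by (auto elim!: set_plus_elim intro: subspace_add)

lemma lie_ideal_set_plus:
  assumes I: "lie_ideal s br I" and J: "lie_ideal s br J"
  shows "lie_ideal s br (I + J)"
proof -
  have "br z w \<in> I + J" if "w \<in> I + J" for z w
  proof -
    obtain a b where "w = a + b" "a \<in> I" "b \<in> J"
      using \<open>w \<in> I + J\<close> by (rule set_plus_elim)
    moreover have "br z a \<in> I" "br z b \<in> J"
      using I J \<open>a \<in> I\<close> \<open>b \<in> J\<close> by (auto simp: lie_ideal_def)
    ultimately show ?thesis
      by (simp add: bracket_add_right set_plus_intro)
  qed
  then show ?thesis
    using I J by (simp add: lie_ideal_def subspace_set_plus)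
qed

lemma lie_subalgebra_ideal_plus:
  assumes I: "lie_ideal s br I" and B: "lie_subalgebra s br B"
  shows "lie_subalgebra s br (I + B)"
proof -
  have "br z w \<in> I + B" if "z \<in> I + B" "w \<in> I + B" for z w
  proof -
    obtain c d where z: "z = c + d" "c \<in> I" "d \<in> B"
      using \<open>z \<in> I + B\<close> by (rule set_plus_elim)
    obtain a b where w: "w = a + b" "a \<in> I" "b \<in> B"
      using \<open>w \<in> I + B\<close> by (rule set_plus_elim)
    have "br z w = (br c a + br c b + br d a) + br d b"
      using z w by (simp add: bracket_add_left bracket_add_right algebra_simps)
    moreover have "br c a + br c b + br d a \<in> I"
      using I z w lie_ideal_bracket_left[OF I, of c b] lie_ideal_subspace[OF I]
      by (auto simp: lie_ideal_def intro!: subspace_add)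
    moreover have "br d b \<in> B"
      using B z w by (simp add: lie_subalgebra_def)
    ultimately show ?thesis
      by (simp add: set_plus_intro)
  qed
  then show ?thesis
    using I B by (simp add: lie_ideal_def lie_subalgebra_def subspace_set_plus)
qed

lemma lie_ideal_span_Union:
  assumes "\<And>I. I \<in> F \<Longrightarrow> lie_ideal s br I"
  shows "lie_ideal s br (span (\<Union>F))"
proof -
  have "span (\<Union>F) \<subseteq> {y. br x y \<in> span (\<Union>F)}" for x
  proof (rule span_minimal)
    show "\<Union>F \<subseteq> {y. br x y \<in> span (\<Union>F)}"
      using assms span_superset by (fastforce simp: lie_ideal_def)
    show "subspace {y. br x y \<in> span (\<Union>F)}"
      by (rule subspaceI)
        (simp_all add: bracket_zero_right bracket_add_right bracket_scale_right
          span_zero span_add span_scale)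
  qed
  then show ?thesis
    by (auto simp: lie_ideal_def)
qed

lemma strict_core_eq:
  "strict_core s br B = span (\<Union>{I. lie_ideal s br I \<and> I \<subset> B})"
  unfolding strict_core_def by (metis lie_ideal_imp_subalgebra)

lemma lie_ideal_strict_core: "lie_ideal s br (strict_core s br B)"
  unfolding strict_core_eq by (rule lie_ideal_span_Union) auto

lemma strict_core_subset: "subspace B \<Longrightarrow> strict_core s br B \<subseteq> B"
  unfolding strict_core_eq by (rule span_minimal) auto

lemma lie_ideal_subset_strict_core:
  "lie_ideal s br I \<Longrightarrow> I \<subset> B \<Longrightarrow> I \<subseteq> strict_core s br B"
  unfolding strict_core_eq by (rule subset_trans[OF _ span_superset]) blast

lemma completion_strict_core_subset:
  assumes "completion s br M C" "subspace M"
  shows "strict_core s br C \<subseteq> M"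
  unfolding strict_core_def
  using assms by (intro span_minimal) (auto simp: completion_def)

lemma ideal_completion_Int_eq_strict_core:
  assumes C: "ideal_completion s br M C"
    and N: "lie_ideal s br N" "strict_core s br C \<subseteq> N" "N \<subseteq> M"
  shows "C \<inter> N = strict_core s br C"
proof
  have "lie_ideal s br (C \<inter> N)" and "C \<inter> N \<subset> C"
    using C N lie_ideal_Int by (auto simp: ideal_completion_def completion_def)
  then show "C \<inter> N \<subseteq> strict_core s br C"
    by (rule lie_ideal_subset_strict_core)
  show "strict_core s br C \<subseteq> C \<inter> N"
    using C N strict_core_subset by (auto simp: ideal_completion_def lie_ideal_def)
qed

lemma ideal_completion_plus_not_subset:
  assumes "ideal_completion s br M C" "subspace N"
  shows "\<not> C + N \<subseteq> M"
  using assms subset_set_plus_left[of N C] by (auto simp: ideal_completion_def completion_def)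

lemma ideal_completion_plus_minimal:
  assumes C: "ideal_completion s br M C"
    and N: "lie_ideal s br N" "strict_core s br C \<subseteq> N"
    and J: "lie_ideal s br J" "N \<subseteq> J" "J \<subseteq> C + N"
  shows "J = N \<or> J = C + N"
proof (cases "C \<subseteq> J")
  case True
  then have "C + N \<subseteq> J"
    using J by (simp add: set_plus_subset_subspace lie_ideal_subspace)
  then show ?thesis
    using J by blast
next
  case False
  have C_ideal: "lie_ideal s br C"
    using C by (simp add: ideal_completion_def)
  have "J \<inter> C \<subseteq> strict_core s br C"
    using False by (intro lie_ideal_subset_strict_core lie_ideal_Int J(1) C_ideal) blast
  then have JC: "J \<inter> C \<subseteq> N"
    using N by blast
  have "J \<subseteq> N"
  proof
    fix x assume "x \<in> J"
    obtain c n where cn: "x = c + n" "c \<in> C" "n \<in> N"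
      using J(3) \<open>x \<in> J\<close> by (blast elim: set_plus_elim)
    have "c = x - n"
      using cn by simp
    then have "c \<in> J"
      using subspace_diff[OF lie_ideal_subspace[OF J(1)] \<open>x \<in> J\<close>] cn J(2) by blast
    then show "x \<in> N"
      using JC cn lie_ideal_subspace[OF N(1)] subspace_add by blast
  qed
  then show ?thesis
    using J by blast
qed

lemma maximal_subalgebra_ideal_plus:
  assumes M: "maximal_subalgebra s br M" and X: "lie_ideal s br X" "\<not> X \<subseteq> M"
  shows "X + M = UNIV"
proof -
  have M_sub: "lie_subalgebra s br M"
    using M by (simp add: maximal_subalgebra_def)
  have "M \<subseteq> X + M" "X \<subseteq> X + M"
    using X M_sub by (simp_all add: subset_set_plus_right subset_set_plus_left
        lie_ideal_subspace lie_subalgebra_subspace)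
  moreover have "lie_subalgebra s br (X + M)"
    by (rule lie_subalgebra_ideal_plus[OF X(1) M_sub])
  ultimately show ?thesis
    using M X unfolding maximal_subalgebra_def by blast
qed

text \<open>For y \<in> X \<inter> M write x = a + m with a \<in> Y, m \<in> M; then [a, y] \<in> X \<inter> Y \<subseteq> M.\<close>

lemma lie_ideal_Int_subalgebra:
  assumes X: "lie_ideal s br X" and Y: "lie_ideal s br Y"
    and M: "lie_subalgebra s br M" "Y + M = UNIV" "X \<inter> Y \<subseteq> M"
  shows "lie_ideal s br (X \<inter> M)"
proof -
  have "br x y \<in> M" if "y \<in> X \<inter> M" for x y
  proof -
    obtain a m where am: "x = a + m" "a \<in> Y" "m \<in> M"
      using M(2) by (metis UNIV_I set_plus_elim)
    have "br a y \<in> X \<inter> Y"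
      using X that lie_ideal_bracket_left[OF Y am(2)] by (simp add: lie_ideal_def)
    moreover have "br m y \<in> M"
      using M(1) am that by (simp add: lie_subalgebra_def)
    ultimately show ?thesis
      using am M subspace_add[OF lie_subalgebra_subspace[OF M(1)]] by (auto simp: bracket_add_left)
  qed
  moreover have "br x y \<in> X" if "y \<in> X \<inter> M" for x y
    using X that by (simp add: lie_ideal_def)
  moreover have "subspace (X \<inter> M)"
    using X M(1) by (simp add: lie_ideal_subspace lie_subalgebra_subspace subspace_inter)
  ultimately show ?thesis
    by (simp add: lie_ideal_def)
qed

end

locale finite_dimensional_lie = lie_structure s br + finite_dimensional_vector_space s Basis
  for s :: "'k::field \<Rightarrow> 'v::ab_group_add \<Rightarrow> 'v" and br and Basis
begin

lemma quot_core_dim_eq: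
  assumes M: "maximal_subalgebra s br M" and C: "ideal_completion s br M C"
    and N: "lie_ideal s br N" "strict_core s br C \<subseteq> N" "N \<subseteq> M"
  shows "quot_core_dim s br C = dim (C + N) - dim N"
proof -
  have "subspace C"
    using C by (simp add: ideal_completion_def lie_ideal_subspace)
  then have "dim (C + N) + dim (strict_core s br C) = dim C + dim N"
    using dim_sums_Int[OF \<open>subspace C\<close> lie_ideal_subspace[OF N(1)]]
      ideal_completion_Int_eq_strict_core[OF C N] by (simp add: set_plus_eq)
  moreover have "dim (strict_core s br C) \<le> dim C"
    by (rule dim_subset[OF strict_core_subset[OF \<open>subspace C\<close>]])
  ultimately show ?thesis
    by (simp add: quot_core_dim_def)
qed

lemma minimal_ideal_complement_dim:
  assumes M: "maximal_subalgebra s br M" and N: "N \<subseteq> M"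
    and X: "lie_ideal s br X" "N \<subseteq> X" "\<not> X \<subseteq> M"
    and X_minimal: "\<And>J. lie_ideal s br J \<Longrightarrow> N \<subseteq> J \<Longrightarrow> J \<subseteq> X \<Longrightarrow> J = N \<or> J = X"
    and Y: "lie_ideal s br Y" "\<not> Y \<subseteq> M" "X \<inter> Y = N"
  shows "dim X + dim M = dim (UNIV :: 'v set) + dim N"
proof -
  have M_sub: "lie_subalgebra s br M"
    using M by (simp add: maximal_subalgebra_def)
  have "lie_ideal s br (X \<inter> M)"
    using M N Y by (intro lie_ideal_Int_subalgebra[OF X(1) Y(1) M_sub])
      (auto simp: maximal_subalgebra_ideal_plus)
  then have "X \<inter> M = N"
    using X_minimal[of "X \<inter> M"] N X by blast
  then show ?thesis
    using dim_sums_Int[OF lie_ideal_subspace[OF X(1)] lie_subalgebra_subspace[OF M_sub]]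
      maximal_subalgebra_ideal_plus[OF M X(1,3)] by (simp add: set_plus_eq)
qed

lemma minimal_ideals_dim_eq:
  assumes M: "maximal_subalgebra s br M" and N: "N \<subseteq> M"
    and A: "lie_ideal s br A" "N \<subseteq> A" "\<not> A \<subseteq> M"
    and A_minimal: "\<And>J. lie_ideal s br J \<Longrightarrow> N \<subseteq> J \<Longrightarrow> J \<subseteq> A \<Longrightarrow> J = N \<or> J = A"
    and B: "lie_ideal s br B" "N \<subseteq> B" "\<not> B \<subseteq> M"
    and B_minimal: "\<And>J. lie_ideal s br J \<Longrightarrow> N \<subseteq> J \<Longrightarrow> J \<subseteq> B \<Longrightarrow> J = N \<or> J = B"
  shows "dim A = dim B"
proof (cases "A \<inter> B = N")
  case True
  then have "dim A + dim M = dim (UNIV :: 'v set) + dim N"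
    and "dim B + dim M = dim (UNIV :: 'v set) + dim N"
    using minimal_ideal_complement_dim[OF M N A A_minimal B(1,3)]
      minimal_ideal_complement_dim[OF M N B B_minimal A(1,3)] by (simp_all add: Int_commute)
  then show ?thesis
    by simp
next
  case False
  have "lie_ideal s br (A \<inter> B)"
    using A(1) B(1) by (rule lie_ideal_Int)
  then have "A \<inter> B = A" and "A \<inter> B = B"
    using A_minimal[of "A \<inter> B"] B_minimal[of "A \<inter> B"] A(2) B(2) False by blast+
  then show ?thesis
    by simp
qed

end

lemma finite_dim_lie_algebra_obtains_basis:
  assumes "lie_algebra s br" "finite_dim s"
  obtains Basis where "finite_dimensional_lie s br Basis"
proof -
  interpret lie_structure s br
    using assms(1) by unfold_locales (simp_all add: lie_algebra_def vector_space_def)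
  obtain S where S: "finite S" "span S = UNIV"
    using assms(2) by (auto simp: finite_dim_def)
  obtain Basis where "Basis \<subseteq> S" "independent Basis" "S \<subseteq> span Basis"
    using maximal_independent_subset by blast
  then have "finite_dimensional_lie s br Basis"
    using S span_minimal[of S "span Basis"] finite_subset by unfold_locales auto
  then show thesis
    by (rule that)
qed

theorem corollary2p2:
  fixes s :: "'k::field \<Rightarrow> 'v::ab_group_add \<Rightarrow> 'v" and br :: "'v \<Rightarrow> 'v \<Rightarrow> 'v"
    and M C1 C2 :: "'v set"
  assumes "lie_algebra s br" and "finite_dim s"
    and "maximal_subalgebra s br M"
    and "ideal_completion s br M C1" and "ideal_completion s br M C2"
  shows "quot_core_dim s br C1 = quot_core_dim s br C2"
proof -
  obtain Basis where "finite_dimensional_lie s br Basis"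
    using assms(1,2) by (rule finite_dim_lie_algebra_obtains_basis)
  then interpret finite_dimensional_lie s br Basis .
  define N where "N = strict_core s br C1 + strict_core s br C2"
  have "subspace M"
    using assms(3) by (simp add: maximal_subalgebra_def lie_subalgebra_subspace)
  then have N_M: "N \<subseteq> M"
    unfolding N_def using assms(4,5)
    by (intro set_plus_subset_subspace completion_strict_core_subset)
      (simp_all add: ideal_completion_def)
  have N: "lie_ideal s br N"
    by (simp add: N_def lie_ideal_set_plus lie_ideal_strict_core)
  have core_N: "strict_core s br C1 \<subseteq> N" "strict_core s br C2 \<subseteq> N"
    by (simp_all add: N_def subset_set_plus_left subset_set_plus_right
        lie_ideal_subspace lie_ideal_strict_core)
  have completion_plus_N: "lie_ideal s br (C + N)" "N \<subseteq> C + N" "\<not> C + N \<subseteq> M"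
    if "ideal_completion s br M C" for C
    using that N by (simp_all add: ideal_completion_def lie_ideal_set_plus lie_ideal_subspace
        subset_set_plus_right ideal_completion_plus_not_subset)
  have "dim (C1 + N) = dim (C2 + N)"
    using completion_plus_N[OF assms(4)] completion_plus_N[OF assms(5)]
      ideal_completion_plus_minimal[OF assms(4) N core_N(1)]
      ideal_completion_plus_minimal[OF assms(5) N core_N(2)]
    by (intro minimal_ideals_dim_eq[OF assms(3) N_M]) auto
  then show ?thesis
    using quot_core_dim_eq[OF assms(3,4) N core_N(1) N_M]
      quot_core_dim_eq[OF assms(3,5) N core_N(2) N_M] by simp
qed

end
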